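(* Let $T=\{0,\dots,N\}$ and $\mathbb{F}$ a field. Let $C_\bullet$, $C'_\bullet$ be filtrations of finite-dimensional chain complexes $C$, $C'$ over $\mathbb{F}$ with filtration compatible ordered bases $\mathfrak{C}$, $\mathfrak{C}'$ (each of size $n$) and filtration boundary matrices $D$, $D'$. Let $\varphi_\bullet\colon C_\bullet\to C'_\bullet$ be an injective morphism of filtrations of chain complexes with $\varphi=\varphi_N$ an isomorphism, $F$ its matrix with respect to $\mathfrak{C},\mathfrak{C}'$, and $D^{\varphi}=DF^{-1}=F^{-1}D'$. Let $V'$ and $V^{\varphi}$ be invertible upper-triangular matrices such that $R'=D'V'$ and $R^{\varphi}=D^{\varphi}V^{\varphi}$ are reduced. Then for every index $j$, the column $r^{\varphi}_j$ is zero if and only if the column $r'_j$ is zero.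
   Context: A chain complex is a finite-dimensional graded vector space with differential $\partial$ of degree $-1$, $\partial^2=0$; a filtration of chain complexes is a chain of subcomplexes $C_0\subseteq\dots\subseteq C_N=C$. A basis $\mathfrak{M}$ of $M_N$ is filtration compatible if $\mathfrak{M}\cap M_t$ is a basis of $M_t$ for all $t$; an ordered such basis is a filtration compatible ordered basis if $m\le m'$ implies $\{t\mid m'\in M_t\}\subseteq\{t\mid m\in M_t\}$. The filtration boundary matrix is the matrix of $\partial$ in that basis. For a matrix $X$, $x_j$ is its $j$-th column; for a nonzero column, its pivot is the largest row index of a nonzero entry; $X$ is reduced if no two nonzero columns have the same pivot. *)

theory Defs
  imports "Jordan_Normal_Form.Matrix"
begin

text \<open>Pivot of a column: largest row index of a nonzero entry (meaningful for nonzero columns).\<close>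
definition col_pivot :: "'a::zero mat \<Rightarrow> nat \<Rightarrow> nat" where
  "col_pivot X j = Max {i. i < dim_row X \<and> X $$ (i, j) \<noteq> 0}"

definition zero_col :: "'a::zero mat \<Rightarrow> nat \<Rightarrow> bool" where
  "zero_col X j \<longleftrightarrow> (\<forall>i < dim_row X. X $$ (i, j) = 0)"

definition reduced :: "'a::zero mat \<Rightarrow> bool" where
  "reduced X \<longleftrightarrow> (\<forall>j1 < dim_col X. \<forall>j2 < dim_col X.
      j1 \<noteq> j2 \<longrightarrow> \<not> zero_col X j1 \<longrightarrow> \<not> zero_col X j2 \<longrightarrow>
      col_pivot X j1 \<noteq> col_pivot X j2)"

text \<open>A filtration C_0 \<subseteq> ... \<subseteq> C_N = C of a chain complex with filtration compatible
  ordered basis of size n: C_t is spanned by the first k t basis vectors, k monotone,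
  k N = n, each C_t is a subcomplex, the basis is homogeneous (degree function deg) and the
  boundary matrix D has degree -1 and squares to zero.\<close>
definition filtered_complex ::
  "nat \<Rightarrow> nat \<Rightarrow> (nat \<Rightarrow> nat) \<Rightarrow> (nat \<Rightarrow> int) \<Rightarrow> 'a::field mat \<Rightarrow> bool" where
  "filtered_complex n N k deg D \<longleftrightarrow>
     D \<in> carrier_mat n n \<and> D * D = 0\<^sub>m n n \<and>
     (\<forall>i < n. \<forall>j < n. D $$ (i, j) \<noteq> 0 \<longrightarrow> deg i = deg j - 1) \<and>
     (\<forall>t t'. t \<le> t' \<longrightarrow> t' \<le> N \<longrightarrow> k t \<le> k t') \<and> k N = n \<and>
     (\<forall>t \<le> N. \<forall>i < n. \<forall>j < k t. D $$ (i, j) \<noteq> 0 \<longrightarrow> i < k t)"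

text \<open>F is the matrix (columns = images of basis vectors) of an injective morphism of
  filtrations of chain complexes: commutes with the differentials, preserves degrees,
  maps C_t into C'_t, and each restriction to C_t is injective.\<close>
definition injective_filtration_morphism ::
  "nat \<Rightarrow> nat \<Rightarrow> (nat \<Rightarrow> nat) \<Rightarrow> (nat \<Rightarrow> int) \<Rightarrow> 'a::field mat \<Rightarrow>
   (nat \<Rightarrow> nat) \<Rightarrow> (nat \<Rightarrow> int) \<Rightarrow> 'a mat \<Rightarrow> 'a mat \<Rightarrow> bool" where
  "injective_filtration_morphism n N k deg D k' deg' D' F \<longleftrightarrow>
     F \<in> carrier_mat n n \<and> F * D = D' * F \<and>
     (\<forall>i < n. \<forall>j < n. F $$ (i, j) \<noteq> 0 \<longrightarrow> deg' i = deg j) \<and>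
     (\<forall>t \<le> N. \<forall>i < n. \<forall>j < k t. F $$ (i, j) \<noteq> 0 \<longrightarrow> i < k' t) \<and>
     (\<forall>t \<le> N. \<forall>v \<in> carrier_vec n. (\<forall>i. k t \<le> i \<and> i < n \<longrightarrow> v $ i = 0) \<longrightarrow>
        F *\<^sub>v v = 0\<^sub>v n \<longrightarrow> v = 0\<^sub>v n)"

end

theory Submission
  imports Defs "Jordan_Normal_Form.Determinant"
begin

text \<open>Call j the pivot of a vector w if w $ j is its last nonzero entry. For a reduction
  R = A V with V invertible and upper triangular, column j of R is zero iff some vector in the
  kernel of A has pivot j: multiplication by V preserves pivots of vectors, and every kernel
  vector of a reduced matrix is supported on its zero columns (otherwise the largest pivot among
  the nonzero columns in its support survives in R w). The kernel of A does not change under left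
  multiplication with an invertible matrix, and D^phi = F^-1 D', so the reductions of D^phi
  and D' have the same zero columns.\<close>

definition is_vec_pivot :: "'a::zero vec \<Rightarrow> nat \<Rightarrow> bool" where
  "is_vec_pivot w j \<longleftrightarrow>
     j < dim_vec w \<and> w $ j \<noteq> 0 \<and> (\<forall>i. j < i \<and> i < dim_vec w \<longrightarrow> w $ i = 0)"

definition is_kernel_pivot :: "'a::semiring_0 mat \<Rightarrow> nat \<Rightarrow> bool" where
  "is_kernel_pivot A j \<longleftrightarrow>
     (\<exists>w \<in> carrier_vec (dim_col A). is_vec_pivot w j \<and> A *\<^sub>v w = 0\<^sub>v (dim_row A))"

lemma sum_eq_single_nonzero:
  assumes "finite S" "a \<in> S" "\<And>x. x \<in> S \<Longrightarrow> x \<noteq> a \<Longrightarrow> f x = 0"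
  shows "sum f S = f a"
  using assms by (metis add.right_neutral sum.neutral sum.remove DiffE singletonI)

lemma mult_mat_vec_index_sum:
  assumes "A \<in> carrier_mat m n" "u \<in> carrier_vec n" "i < m"
  shows "(A *\<^sub>v u) $ i = (\<Sum>l<n. A $$ (i, l) * u $ l)"
  using assms by (simp add: scalar_prod_def atLeast0LessThan)

lemma
  assumes "\<not> zero_col R j"
  shows col_pivot_less: "col_pivot R j < dim_row R"
    and col_pivot_nonzero: "R $$ (col_pivot R j, j) \<noteq> 0"
    and col_pivot_greater_zero: "col_pivot R j < i \<Longrightarrow> i < dim_row R \<Longrightarrow> R $$ (i, j) = 0"
proof -
  let ?S = "{i. i < dim_row R \<and> R $$ (i, j) \<noteq> 0}"
  have "finite ?S" "?S \<noteq> {}" using assms unfolding zero_col_def by auto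
  then have "col_pivot R j \<in> ?S" unfolding col_pivot_def by (intro Max_in) auto
  then show "col_pivot R j < dim_row R" "R $$ (col_pivot R j, j) \<noteq> 0" by auto
  show "R $$ (i, j) = 0" if "col_pivot R j < i" "i < dim_row R"
    using that Max_ge[OF \<open>finite ?S\<close>, of i] unfolding col_pivot_def by fastforce
qed

lemma is_vec_pivot_unique: "is_vec_pivot w i \<Longrightarrow> is_vec_pivot w j \<Longrightarrow> i = j"
  unfolding is_vec_pivot_def by (metis linorder_neqE_nat)

lemma nonzero_vec_has_pivot:
  assumes "w \<noteq> 0\<^sub>v (dim_vec w)"
  obtains j where "is_vec_pivot w j"
proof -
  let ?S = "{i. i < dim_vec w \<and> w $ i \<noteq> 0}"
  have "finite ?S" "?S \<noteq> {}" using assms by auto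
  then have "Max ?S \<in> ?S" by (intro Max_in) auto
  moreover have "w $ i = 0" if "Max ?S < i" "i < dim_vec w" for i
    using that Max_ge[OF \<open>finite ?S\<close>, of i] by fastforce
  ultimately show thesis using that unfolding is_vec_pivot_def by blast
qed

lemma invertible_mat_obtain_inverse:
  assumes "invertible_mat V" "V \<in> carrier_mat n n"
  obtains W where "W \<in> carrier_mat n n" "V * W = 1\<^sub>m n" "W * V = 1\<^sub>m n"
proof -
  obtain W where VW: "V * W = 1\<^sub>m n" and WV: "W * V = 1\<^sub>m (dim_row W)"
    using assms unfolding invertible_mat_def inverts_mat_def by auto
  have "dim_col W = n" using arg_cong[OF VW, of dim_col] by simp
  moreover have "dim_row W = n" using arg_cong[OF WV, of dim_col] assms(2) by simp
  ultimately show thesis using that VW WV by auto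
qed

lemma upper_triangular_invertible_diag_nonzero:
  fixes V :: "'a::idom mat"
  assumes "V \<in> carrier_mat n n" "upper_triangular V" "invertible_mat V" "j < n"
  shows "V $$ (j, j) \<noteq> 0"
proof -
  obtain W where W: "W \<in> carrier_mat n n" "V * W = 1\<^sub>m n"
    using invertible_mat_obtain_inverse assms(1,3) by metis
  have "det V * det W = 1" using det_mult[OF assms(1) W(1)] W(2) by simp
  then have "det V \<noteq> 0" by auto
  then have "0 \<notin> set (diag_mat V)" using upper_triangular_imp_det_eq_0_iff[OF assms(1,2)] by simp
  then show ?thesis using assms(1,4) unfolding diag_mat_def by auto
qed

lemma upper_triangular_mult_vec_index_ge_pivot:
  assumes V: "V \<in> carrier_mat n n" "upper_triangular V"
    and u: "u \<in> carrier_vec n" "is_vec_pivot u j" and i: "j \<le> i" "i < n"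
  shows "(V *\<^sub>v u) $ i = V $$ (i, j) * u $ j"
proof -
  have "(V *\<^sub>v u) $ i = (\<Sum>l<n. V $$ (i, l) * u $ l)"
    using mult_mat_vec_index_sum V u i by blast
  also have "\<dots> = V $$ (i, j) * u $ j"
  proof (rule sum_eq_single_nonzero)
    fix l assume "l \<in> {..<n}" "l \<noteq> j"
    show "V $$ (i, l) * u $ l = 0"
    proof (cases "l < i")
      case True
      then show ?thesis using upper_triangularD[OF V(2) True] V(1) i by simp
    next
      case False
      then show ?thesis using u \<open>l \<in> {..<n}\<close> \<open>l \<noteq> j\<close> i
        unfolding is_vec_pivot_def by simp
    qed
  qed (use i in auto)
  finally show ?thesis .
qed

lemma upper_triangular_mult_vec_pivot:
  fixes V :: "'a::idom mat"
  assumes V: "V \<in> carrier_mat n n" "upper_triangular V" "\<And>i. i < n \<Longrightarrow> V $$ (i, i) \<noteq> 0"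
    and u: "u \<in> carrier_vec n" "is_vec_pivot u j"
  shows "is_vec_pivot (V *\<^sub>v u) j"
proof -
  have "j < n" using u unfolding is_vec_pivot_def by simp
  have "(V *\<^sub>v u) $ i = 0" if "j < i" "i < n" for i
    using upper_triangular_mult_vec_index_ge_pivot[OF V(1,2) u, of i] that
      upper_triangularD[OF V(2), of j i] V(1) by simp
  moreover have "(V *\<^sub>v u) $ j \<noteq> 0"
    using upper_triangular_mult_vec_index_ge_pivot[OF V(1,2) u] V(3) u \<open>j < n\<close>
    unfolding is_vec_pivot_def by simp
  ultimately show ?thesis using V(1) \<open>j < n\<close> unfolding is_vec_pivot_def by simp
qed

lemma upper_triangular_mult_vec_pivot_iff:
  fixes V :: "'a::idom mat"
  assumes V: "V \<in> carrier_mat n n" "upper_triangular V" "\<And>i. i < n \<Longrightarrow> V $$ (i, i) \<noteq> 0"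
    and u: "u \<in> carrier_vec n"
  shows "is_vec_pivot (V *\<^sub>v u) j \<longleftrightarrow> is_vec_pivot u j"
proof
  assume pivot: "is_vec_pivot (V *\<^sub>v u) j"
  have "u \<noteq> 0\<^sub>v n"
    using pivot V(1) unfolding is_vec_pivot_def by auto
  then obtain m where "is_vec_pivot u m"
    using nonzero_vec_has_pivot u by (metis carrier_vecD)
  moreover from this have "is_vec_pivot (V *\<^sub>v u) m"
    using upper_triangular_mult_vec_pivot V u by blast
  ultimately show "is_vec_pivot u j" using pivot is_vec_pivot_unique by metis
qed (use upper_triangular_mult_vec_pivot V u in blast)

lemma reduced_kernel_supported_on_zero_cols:
  fixes R :: "'a::idom mat"
  assumes R: "R \<in> carrier_mat m n" "reduced R"
    and u: "u \<in> carrier_vec n" "R *\<^sub>v u = 0\<^sub>v m"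
    and l: "l < n" "u $ l \<noteq> 0"
  shows "zero_col R l"
proof (rule ccontr)
  assume "\<not> zero_col R l"
  define S where "S = {l. l < n \<and> u $ l \<noteq> 0 \<and> \<not> zero_col R l}"
  have "finite S" "S \<noteq> {}" using l \<open>\<not> zero_col R l\<close> unfolding S_def by auto
  then obtain s where s: "s \<in> S" and s_max: "\<And>l. l \<in> S \<Longrightarrow> col_pivot R l \<le> col_pivot R s"
    using Max_in[of "col_pivot R ` S"] Max_ge[of "col_pivot R ` S"] by fastforce
  define p where "p = col_pivot R s"
  have "p < m" "R $$ (p, s) \<noteq> 0"
    using s R(1) col_pivot_less col_pivot_nonzero unfolding S_def p_def by fastforce+
  have "(R *\<^sub>v u) $ p = (\<Sum>l<n. R $$ (p, l) * u $ l)"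
    using mult_mat_vec_index_sum R(1) u(1) \<open>p < m\<close> by blast
  also have "\<dots> = R $$ (p, s) * u $ s"
  proof (rule sum_eq_single_nonzero)
    fix l assume l: "l \<in> {..<n}" "l \<noteq> s"
    show "R $$ (p, l) * u $ l = 0"
    proof (cases "l \<in> S")
      case True
      then have "col_pivot R l \<noteq> p"
        using R l s unfolding reduced_def S_def p_def by auto
      then have "col_pivot R l < p" using s_max[OF True] unfolding p_def by simp
      then show ?thesis
        using col_pivot_greater_zero True R(1) \<open>p < m\<close> unfolding S_def by fastforce
    next
      case False
      then show ?thesis using l R(1) \<open>p < m\<close> unfolding S_def zero_col_def by auto
    qed
  qed (use s S_def in auto)
  finally show False using u(2) \<open>p < m\<close> \<open>R $$ (p, s) \<noteq> 0\<close> s unfolding S_def by simp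
qed

lemma reduced_zero_col_iff_kernel_pivot:
  fixes A V :: "'a::idom mat"
  assumes A: "A \<in> carrier_mat m n"
    and V: "V \<in> carrier_mat n n" "upper_triangular V" "invertible_mat V"
    and "reduced (A * V)" and j: "j < n"
  shows "zero_col (A * V) j \<longleftrightarrow> is_kernel_pivot A j"
proof -
  have diag: "\<And>i. i < n \<Longrightarrow> V $$ (i, i) \<noteq> 0"
    using upper_triangular_invertible_diag_nonzero V by blast
  show ?thesis
  proof
    assume "zero_col (A * V) j"
    then have "col (A * V) j = 0\<^sub>v m"
      using A V(1) j unfolding zero_col_def by (auto intro!: eq_vecI)
    then have "A *\<^sub>v col V j = 0\<^sub>v m" using col_mult2 A V(1) j by metis
    moreover have "is_vec_pivot (col V j) j"
      using V(1) diag j upper_triangularD[OF V(2), of j] unfolding is_vec_pivot_def by simp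
    ultimately show "is_kernel_pivot A j"
      using A V(1) unfolding is_kernel_pivot_def by (intro bexI[of _ "col V j"]) auto
  next
    assume "is_kernel_pivot A j"
    then obtain w where w: "w \<in> carrier_vec n" "is_vec_pivot w j" "A *\<^sub>v w = 0\<^sub>v m"
      using A unfolding is_kernel_pivot_def by auto
    obtain W where W: "W \<in> carrier_mat n n" "V * W = 1\<^sub>m n"
      using invertible_mat_obtain_inverse V(1,3) by metis
    define u where "u = W *\<^sub>v w"
    have u: "u \<in> carrier_vec n" using W w unfolding u_def by simp
    have Vu: "V *\<^sub>v u = w"
      using assoc_mult_mat_vec[OF V(1) W(1) w(1)] W(2) w(1) unfolding u_def by simp
    have "u $ j \<noteq> 0"
      using upper_triangular_mult_vec_pivot_iff[OF V(1,2) diag u] Vu w(2)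
      unfolding is_vec_pivot_def by simp
    moreover have "(A * V) *\<^sub>v u = 0\<^sub>v m"
      using assoc_mult_mat_vec[OF A V(1) u] Vu w(3) by simp
    moreover have "A * V \<in> carrier_mat m n" using A V(1) by simp
    ultimately show "zero_col (A * V) j"
      using reduced_kernel_supported_on_zero_cols \<open>reduced (A * V)\<close> u j by blast
  qed
qed

lemma is_kernel_pivot_mult_left_invertible:
  fixes A P Q :: "'a::comm_semiring_1 mat"
  assumes A: "A \<in> carrier_mat m n"
    and P: "P \<in> carrier_mat k m" and Q: "Q \<in> carrier_mat m k" "Q * P = 1\<^sub>m m"
  shows "is_kernel_pivot (P * A) j \<longleftrightarrow> is_kernel_pivot A j"
proof -
  have kernel_eq: "(P * A) *\<^sub>v w = 0\<^sub>v k \<longleftrightarrow> A *\<^sub>v w = 0\<^sub>v m" if w: "w \<in> carrier_vec n" for w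
  proof
    assume "(P * A) *\<^sub>v w = 0\<^sub>v k"
    then have "Q *\<^sub>v (P *\<^sub>v (A *\<^sub>v w)) = 0\<^sub>v m"
      using assoc_mult_mat_vec[OF P A w] Q(1) by auto
    then show "A *\<^sub>v w = 0\<^sub>v m"
      using assoc_mult_mat_vec[OF Q(1) P, of "A *\<^sub>v w"] Q(2) A w by simp
  qed (use assoc_mult_mat_vec[OF P A w] P in auto)
  have dims: "dim_col (P * A) = n" "dim_row (P * A) = k" "dim_col A = n" "dim_row A = m"
    using A P by auto
  show ?thesis
    unfolding is_kernel_pivot_def dims by (intro bex_cong refl) (simp add: kernel_eq)
qed

lemma inverse_intertwines:
  fixes D D' F G :: "'a::semiring_1 mat"
  assumes "D \<in> carrier_mat n n" "D' \<in> carrier_mat n n" "F \<in> carrier_mat n n"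
    "G \<in> carrier_mat n n" "F * G = 1\<^sub>m n" "G * F = 1\<^sub>m n" "F * D = D' * F"
  shows "D * G = G * D'"
proof -
  have "D * G = (G * F) * D * G" using assms(1,4,6) by simp
  also have "\<dots> = G * (F * D) * G" using assms(1,3,4) by (simp add: assoc_mult_mat)
  also have "\<dots> = G * D' * F * G"
    using assoc_mult_mat[OF assms(4,2,3)] assms(7) by simp
  also have "\<dots> = G * D' * (F * G)"
    using assoc_mult_mat[OF mult_carrier_mat[OF assms(4,2)] assms(3,4)] .
  finally show ?thesis using assms(2,4,5) by simp
qed

theorem proposition3p10:
  fixes D D' F Finv V' Vphi :: "'a::field mat"
    and n N :: nat and k k' :: "nat \<Rightarrow> nat" and deg deg' :: "nat \<Rightarrow> int"
  assumes "filtered_complex n N k deg D"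
    and "filtered_complex n N k' deg' D'"
    and "injective_filtration_morphism n N k deg D k' deg' D' F"
    and "Finv \<in> carrier_mat n n" and "F * Finv = 1\<^sub>m n" and "Finv * F = 1\<^sub>m n"
    and "V' \<in> carrier_mat n n" and "upper_triangular V'" and "invertible_mat V'"
    and "Vphi \<in> carrier_mat n n" and "upper_triangular Vphi" and "invertible_mat Vphi"
    and "reduced (D' * V')"
    and "reduced ((D * Finv) * Vphi)"
  shows "\<forall>j < n. zero_col ((D * Finv) * Vphi) j \<longleftrightarrow> zero_col (D' * V') j"
proof (intro allI impI)
  fix j assume j: "j < n"
  have D: "D \<in> carrier_mat n n" and D': "D' \<in> carrier_mat n n"
    using assms(1,2) unfolding filtered_complex_def by auto
  have F: "F \<in> carrier_mat n n" "F * D = D' * F"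
    using assms(3) unfolding injective_filtration_morphism_def by auto
  have Dphi: "D * Finv = Finv * D'"
    using inverse_intertwines D D' F assms(4-6) by blast
  have "zero_col ((D * Finv) * Vphi) j \<longleftrightarrow> is_kernel_pivot (Finv * D') j"
    using reduced_zero_col_iff_kernel_pivot[of "Finv * D'" n n Vphi] assms(4,10-12,14) D' j
    unfolding Dphi by auto
  also have "\<dots> \<longleftrightarrow> is_kernel_pivot D' j"
    using is_kernel_pivot_mult_left_invertible D' assms(4) F(1) assms(5) by blast
  also have "\<dots> \<longleftrightarrow> zero_col (D' * V') j"
    using reduced_zero_col_iff_kernel_pivot D' assms(7-9,13) j by blast
  finally show "zero_col ((D * Finv) * Vphi) j \<longleftrightarrow> zero_col (D' * V') j" .
qed

end
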